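(* Let $1\le p<\infty$, $X=\ell_p(\mathbb Z_+)$, and let $\mathbf u,\mathbf v$ be bounded sequences of non-zero scalars. Assume that either $$\liminf_{n\to\infty}\max_{0\le d\le N}\left|\frac{u_1\cdots u_{n+d}}{v_1\cdots v_{n+d}}\right|=0\quad\text{for all }N\ge0,$$ or $$\limsup_{n\to\infty}\min_{0\le d\le N}\left|\frac{u_1\cdots u_{n+d}}{v_1\cdots v_{n+d}}\right|=\infty\quad\text{for all }N\ge0.$$ Then $B_{\mathbf u}$ and $B_{\mathbf v}$ are orthogonal.
   Context: $(e_n)_{n\ge0}$ is the canonical basis of $\ell_p(\mathbb Z_+)$ (real or complex). For a bounded sequence $\mathbf w$ of non-zero scalars, $B_{\mathbf w}e_0=0$, $B_{\mathbf w}e_n=w_ne_{n-1}$. Two operators $T_1,T_2$ on $X$ are orthogonal if whenever $m_1,m_2$ are Borel probability measures invariant under $T_1$, $T_2$ respectively (i.e. $m_i(T_i^{-1}A)=m_i(A)$ for Borel $A$) with $m_1(\{0\})=0=m_2(\{0\})$, then $m_1$ and $m_2$ are mutually singular. *)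

theory Defs
  imports "HOL-Analysis.Analysis" "HOL-Probability.Probability"
begin

definition lp :: "real \<Rightarrow> (nat \<Rightarrow> 'a::real_normed_field) set" where
  "lp p = {x. summable (\<lambda>n. norm (x n) powr p)}"

definition lp_norm :: "real \<Rightarrow> (nat \<Rightarrow> 'a::real_normed_field) \<Rightarrow> real" where
  "lp_norm p x = (\<Sum>n. norm (x n) powr p) powr (1 / p)"

definition lp_topology :: "real \<Rightarrow> (nat \<Rightarrow> 'a::real_normed_field) topology" where
  "lp_topology p = Metric_space.mtopology (lp p) (\<lambda>x y. lp_norm p (\<lambda>n. x n - y n))"

definition lp_borel :: "real \<Rightarrow> (nat \<Rightarrow> 'a::real_normed_field) measure" where
  "lp_borel p = sigma (lp p) {U. openin (lp_topology p) U}"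

text \<open>Weighted backward shift: B_w e_0 = 0, B_w e_n = w_n e_(n-1),
  i.e. (B_w x)_k = w_(k+1) x_(k+1).\<close>

definition wshift :: "(nat \<Rightarrow> 'a::real_normed_field) \<Rightarrow> (nat \<Rightarrow> 'a) \<Rightarrow> (nat \<Rightarrow> 'a)" where
  "wshift w x = (\<lambda>k. w (Suc k) * x (Suc k))"

definition lp_invariant_prob ::
  "real \<Rightarrow> ((nat \<Rightarrow> 'a::real_normed_field) \<Rightarrow> (nat \<Rightarrow> 'a)) \<Rightarrow> (nat \<Rightarrow> 'a) measure \<Rightarrow> bool" where
  "lp_invariant_prob p T m \<longleftrightarrow>
     prob_space m \<and> sets m = sets (lp_borel p) \<and> space m = lp p \<and>
     (\<forall>A \<in> sets (lp_borel p). emeasure m {x \<in> lp p. T x \<in> A} = emeasure m A)"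

definition mutually_singular :: "'b measure \<Rightarrow> 'b measure \<Rightarrow> bool" where
  "mutually_singular m1 m2 \<longleftrightarrow>
     (\<exists>A \<in> sets m1. A \<in> sets m2 \<and> emeasure m1 A = 0 \<and> emeasure m2 (space m2 - A) = 0)"

definition lp_orthogonal ::
  "real \<Rightarrow> ((nat \<Rightarrow> 'a::real_normed_field) \<Rightarrow> (nat \<Rightarrow> 'a)) \<Rightarrow> ((nat \<Rightarrow> 'a) \<Rightarrow> (nat \<Rightarrow> 'a)) \<Rightarrow> bool" where
  "lp_orthogonal p T1 T2 \<longleftrightarrow>
     (\<forall>m1 m2. lp_invariant_prob p T1 m1 \<and> lp_invariant_prob p T2 m2 \<and>
        emeasure m1 {\<lambda>n. 0} = 0 \<and> emeasure m2 {\<lambda>n. 0} = 0 \<longrightarrow> mutually_singular m1 m2)"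

end

theory Submission
  imports Defs
begin

(*
  Write W_a(x)_k = a_1 ... a_k x_k. Then W_a(B_a x)_k = W_a(x)_(k+1), so under a B_a-invariant
  measure the distribution of the window (W_a(x)_n, ..., W_a(x)_(n+N)) does not depend on n.

  Fix eta > 0. Since m_u has no atom at 0, there are N and delta > 0 such that, with
  m_u-probability > 1 - eta, |W_u(x)_d| > delta for some d <= N; and there is K such that,
  with m_v-probability < eta, |W_v(x)_d| > K for some d <= N. The first hypothesis gives n with
  |u_1 ... u_(n+d) / v_1 ... v_(n+d)| <= delta / K for all d <= N. The event
  E = {|W_v(x)_(n+d)| > K for some d <= N} then has m_v(E) < eta by invariance, while
  |W_v(x)_(n+d)| >= (K / delta) |W_u(x)_(n+d)| and invariance give m_u(E) > 1 - eta.
  Borel-Cantelli along eta = 2^-k turns these events into a set separating m_u from m_v.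
  The second hypothesis is the first one with u and v exchanged.
*)

lemma norm_add_powr_le:
  fixes a b :: "'a::real_normed_vector"
  assumes "0 \<le> p"
  shows "norm (a + b) powr p \<le> 2 powr p * (norm a powr p + norm b powr p)"
proof -
  have "norm (a + b) powr p \<le> (2 * max (norm a) (norm b)) powr p"
    using norm_triangle_ineq[of a b] assms by (intro powr_mono2) auto
  also have "\<dots> = 2 powr p * max (norm a) (norm b) powr p"
    by (simp add: powr_mult)
  also have "max (norm a) (norm b) powr p \<le> norm a powr p + norm b powr p"
    by (simp add: max_def)
  finally show ?thesis
    by (simp add: mult_left_mono)
qed

lemma lp_add:
  assumes "0 \<le> p" "x \<in> lp p" "y \<in> lp p"
  shows "(\<lambda>n. x n + y n) \<in> lp p"
proof -
  have "summable (\<lambda>n. 2 powr p * (norm (x n) powr p + norm (y n) powr p))"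
    using assms by (intro summable_mult summable_add) (auto simp: lp_def)
  then have "summable (\<lambda>n. norm (x n + y n) powr p)"
    by (rule summable_comparison_test'[where N = 0]) (simp add: norm_add_powr_le[OF assms(1)])
  then show ?thesis
    by (simp add: lp_def)
qed

lemma lp_diff:
  assumes "0 \<le> p" "x \<in> lp p" "y \<in> lp p"
  shows "(\<lambda>n. x n - y n) \<in> lp p"
  using lp_add[OF assms(1,2), of "\<lambda>n. - y n"] assms(3) by (simp add: lp_def)

lemma lp_norm_powr:
  assumes "0 < p" "x \<in> lp p"
  shows "lp_norm p x powr p = (\<Sum>n. norm (x n) powr p)"
  using assms suminf_nonneg[of "\<lambda>n. norm (x n) powr p"]
  by (simp add: lp_def lp_norm_def powr_powr)

lemma lp_norm_eq_0_iff:
  assumes "0 < p" "x \<in> lp p"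
  shows "lp_norm p x = 0 \<longleftrightarrow> x = (\<lambda>n. 0)"
  using assms suminf_eq_zero_iff[of "\<lambda>n. norm (x n) powr p"]
  by (auto simp: lp_def lp_norm_def fun_eq_iff)

lemma norm_le_lp_norm:
  assumes "0 < p" "x \<in> lp p"
  shows "norm (x k) \<le> lp_norm p x"
proof -
  have "norm (x k) powr p \<le> (\<Sum>n. norm (x n) powr p)"
    using sum_le_suminf[of "\<lambda>n. norm (x n) powr p" "{k}"] assms by (auto simp: lp_def)
  then have "(norm (x k) powr p) powr (1 / p) \<le> (\<Sum>n. norm (x n) powr p) powr (1 / p)"
    using assms by (intro powr_mono2) auto
  then show ?thesis
    using assms by (simp add: powr_powr lp_norm_def)
qed

lemma convex_powr_le:
  fixes a b s t :: real
  assumes "1 \<le> p" "0 \<le> a" "0 \<le> b" "a + b = 1" "0 \<le> s" "0 \<le> t"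
  shows "(a * s + b * t) powr p \<le> a * s powr p + b * t powr p"
proof -
  have weight: "c powr p * r \<le> c * r" if "0 \<le> c" "c \<le> 1" "0 \<le> r" for c r :: real
    using powr_mono'[OF assms(1) that(1,2)] that by (simp add: mult_right_mono)
  consider "s = 0" | "t = 0" | "0 < s" "0 < t"
    using assms by linarith
  then show ?thesis
  proof cases
    case 1
    then show ?thesis
      using assms weight[of b "t powr p"] by (simp add: powr_mult)
  next
    case 2
    then show ?thesis
      using assms weight[of a "s powr p"] by (simp add: powr_mult)
  next
    case 3
    have "((1 - b) *\<^sub>R s + b *\<^sub>R t) powr p \<le> (1 - b) * s powr p + b * t powr p"
      using convex_onD[OF powr_convex[OF assms(1)], of b s t] assms 3 by simp
    moreover have "1 - b = a"
      using assms(4) by simp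
    ultimately show ?thesis
      by simp
  qed
qed

lemma lp_norm_triangle:
  assumes "1 \<le> p" "x \<in> lp p" "y \<in> lp p"
  shows "lp_norm p (\<lambda>n. x n + y n) \<le> lp_norm p x + lp_norm p y"
proof (cases "lp_norm p x = 0 \<or> lp_norm p y = 0")
  case True
  with assms show ?thesis
    using lp_norm_eq_0_iff[of p x] lp_norm_eq_0_iff[of p y] by (auto simp: lp_norm_def)
next
  case False
  define A B where "A = lp_norm p x" and "B = lp_norm p y"
  have "A > 0" "B > 0"
    using False by (auto simp: A_def B_def lp_norm_def order.strict_iff_order)
  define a b where "a = A / (A + B)" and "b = B / (A + B)"
  have ab: "0 \<le> a" "0 \<le> b" "a + b = 1"
    using \<open>A > 0\<close> \<open>B > 0\<close> by (auto simp: a_def b_def add_divide_distrib[symmetric])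
  have p: "0 < p" "0 \<le> p"
    using assms(1) by auto
  have termwise: "norm (x n + y n) powr p \<le>
      (A + B) powr p * (a * (norm (x n) powr p / A powr p) + b * (norm (y n) powr p / B powr p))" for n
  proof -
    have "norm (x n + y n) powr p \<le> (norm (x n) + norm (y n)) powr p"
      using p by (intro powr_mono2 norm_triangle_ineq) auto
    also have "norm (x n) + norm (y n) = (A + B) * (a * (norm (x n) / A) + b * (norm (y n) / B))"
    proof -
      have "a * (norm (x n) / A) = norm (x n) / (A + B)" "b * (norm (y n) / B) = norm (y n) / (A + B)"
        using \<open>A > 0\<close> \<open>B > 0\<close> by (simp_all add: a_def b_def)
      then show ?thesis
        using \<open>A > 0\<close> \<open>B > 0\<close> by (simp add: add_divide_distrib[symmetric])
    qed
    also have "((A + B) * (a * (norm (x n) / A) + b * (norm (y n) / B))) powr p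
        = (A + B) powr p * (a * (norm (x n) / A) + b * (norm (y n) / B)) powr p"
      by (rule powr_mult)
    also have "\<dots> \<le> (A + B) powr p * (a * (norm (x n) / A) powr p + b * (norm (y n) / B) powr p)"
      using \<open>A > 0\<close> \<open>B > 0\<close> ab by (intro mult_left_mono convex_powr_le assms(1)) auto
    finally show ?thesis
      using \<open>A > 0\<close> \<open>B > 0\<close> by (simp add: powr_divide)
  qed
  have sums: "(\<lambda>n. norm (x n) powr p) sums (A powr p)" "(\<lambda>n. norm (y n) powr p) sums (B powr p)"
    using assms p by (auto simp: A_def B_def lp_norm_powr lp_def summable_sums)
  have "(\<lambda>n. (A + B) powr p * (a * (norm (x n) powr p / A powr p) + b * (norm (y n) powr p / B powr p)))
      sums ((A + B) powr p * (a * (A powr p / A powr p) + b * (B powr p / B powr p)))"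
    by (intro sums_mult sums_add sums_divide sums)
  then have "(\<Sum>n. norm (x n + y n) powr p) \<le> (A + B) powr p"
    using termwise lp_add[OF p(2) assms(2,3)] \<open>A > 0\<close> \<open>B > 0\<close> ab
    by (intro sums_le[OF _ summable_sums]) (auto simp: lp_def)
  then have "lp_norm p (\<lambda>n. x n + y n) \<le> ((A + B) powr p) powr (1 / p)"
    unfolding lp_norm_def using p lp_add[OF p(2) assms(2,3)]
    by (intro powr_mono2 suminf_nonneg) (auto simp: lp_def)
  also have "\<dots> = lp_norm p x + lp_norm p y"
    using p \<open>A > 0\<close> \<open>B > 0\<close> by (simp add: powr_powr A_def B_def)
  finally show ?thesis .
qed

lemma lp_metric:
  assumes "1 \<le> p"
  shows "Metric_space (lp p) (\<lambda>x y. lp_norm p (\<lambda>n. x n - y n))"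
proof
  fix x y :: "nat \<Rightarrow> 'a"
  show "0 \<le> lp_norm p (\<lambda>n. x n - y n)"
    by (simp add: lp_norm_def)
  show "lp_norm p (\<lambda>n. x n - y n) = lp_norm p (\<lambda>n. y n - x n)"
    by (simp add: lp_norm_def norm_minus_commute)
next
  fix x y :: "nat \<Rightarrow> 'a"
  assume "x \<in> lp p" "y \<in> lp p"
  then show "lp_norm p (\<lambda>n. x n - y n) = 0 \<longleftrightarrow> x = y"
    using assms lp_norm_eq_0_iff[of p "\<lambda>n. x n - y n"] lp_diff[of p x y] by (auto simp: fun_eq_iff)
next
  fix x y z :: "nat \<Rightarrow> 'a"
  assume "x \<in> lp p" "y \<in> lp p" "z \<in> lp p"
  then show "lp_norm p (\<lambda>n. x n - z n) \<le> lp_norm p (\<lambda>n. x n - y n) + lp_norm p (\<lambda>n. y n - z n)"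
    using lp_norm_triangle[OF assms lp_diff lp_diff, of x y y z] assms by simp
qed

lemma openin_lp_topology:
  assumes "1 \<le> p"
  shows "openin (lp_topology p) U \<longleftrightarrow> U \<subseteq> lp p \<and>
     (\<forall>x\<in>U. \<exists>r>0. \<forall>y\<in>lp p. lp_norm p (\<lambda>n. x n - y n) < r \<longrightarrow> y \<in> U)"
proof -
  interpret Metric_space "lp p" "\<lambda>x y. lp_norm p (\<lambda>n. x n - y n)"
    by (rule lp_metric[OF assms])
  show ?thesis
    unfolding lp_topology_def openin_mtopology mball_def by blast
qed

lemma
  assumes "1 \<le> p"
  shows space_lp_borel: "space (lp_borel p) = lp p"
    and sets_lp_borel: "sets (lp_borel p) = sigma_sets (lp p) {U. openin (lp_topology p) U}"
  using openin_lp_topology[OF assms]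
  by (auto simp: lp_borel_def space_measure_of_conv sets_measure_of_conv)

lemma lp_coordinate_measurable:
  assumes "1 \<le> p"
  shows "(\<lambda>x. x k) \<in> borel_measurable (lp_borel p)"
proof (rule borel_measurableI)
  fix S :: "'a set"
  assume "open S"
  have "openin (lp_topology p) {x \<in> lp p. x k \<in> S}"
    unfolding openin_lp_topology[OF assms]
  proof (intro conjI ballI)
    fix x
    assume x: "x \<in> {x \<in> lp p. x k \<in> S}"
    then obtain e where e: "e > 0" "ball (x k) e \<subseteq> S"
      using \<open>open S\<close> open_contains_ball by blast
    have "y k \<in> S" if y: "y \<in> lp p" "lp_norm p (\<lambda>n. x n - y n) < e" for y
    proof -
      have "norm (x k - y k) \<le> lp_norm p (\<lambda>n. x n - y n)"
        using norm_le_lp_norm[of p "\<lambda>n. x n - y n"] lp_diff[of p x y] assms x y by simp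
      then show ?thesis
        using e y by (auto simp: dist_norm)
    qed
    then show "\<exists>r>0. \<forall>y\<in>lp p. lp_norm p (\<lambda>n. x n - y n) < r \<longrightarrow> y \<in> {x \<in> lp p. x k \<in> S}"
      using e by blast
  qed auto
  moreover have "(\<lambda>x. x k) -` S \<inter> space (lp_borel p) = {x \<in> lp p. x k \<in> S}"
    by (auto simp: space_lp_borel[OF assms])
  ultimately show "(\<lambda>x. x k) -` S \<inter> space (lp_borel p) \<in> sets (lp_borel p)"
    by (auto simp: sets_lp_borel[OF assms] intro: sigma_sets.Basic)
qed

lemma wshift_lp:
  assumes "0 \<le> p" "bounded (range a)" "x \<in> lp p"
  shows "wshift a x \<in> lp p"
proof -
  obtain C where C: "\<And>n. norm (a n) \<le> C"
    using assms(2) by (auto simp: bounded_iff)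
  have "summable (\<lambda>n. norm (x (Suc n)) powr p)"
    using assms(3) summable_Suc_iff[where f = "\<lambda>n. norm (x n) powr p"] by (simp add: lp_def)
  then have "summable (\<lambda>n. C powr p * norm (x (Suc n)) powr p)"
    by (rule summable_mult)
  moreover have "norm (norm (a (Suc n) * x (Suc n)) powr p) \<le> C powr p * norm (x (Suc n)) powr p" for n
    using C assms(1) by (auto simp: norm_mult powr_mult intro!: mult_right_mono powr_mono2)
  ultimately have "summable (\<lambda>n. norm (a (Suc n) * x (Suc n)) powr p)"
    by (rule summable_comparison_test'[where N = 0])
  then show ?thesis
    by (simp add: lp_def wshift_def)
qed

definition wprod :: "(nat \<Rightarrow> 'a::comm_monoid_mult) \<Rightarrow> nat \<Rightarrow> 'a" where
  "wprod a n = (\<Prod>i\<in>{1..n}. a i)"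

lemma wprod_Suc: "wprod a (Suc n) = wprod a n * a (Suc n)"
  by (simp add: wprod_def prod.nat_ivl_Suc' mult.commute)

lemma wprod_nonzero:
  fixes a :: "nat \<Rightarrow> 'a::field"
  assumes "\<forall>n\<ge>1. a n \<noteq> 0"
  shows "wprod a n \<noteq> 0"
  using assms by (simp add: wprod_def)

lemma wprod_wshift: "wprod a k * wshift a x k = wprod a (Suc k) * x (Suc k)"
  by (simp add: wshift_def wprod_Suc mult.assoc)

definition window_exceeds ::
    "real \<Rightarrow> nat \<Rightarrow> real \<Rightarrow> (nat \<Rightarrow> 'a::real_normed_field) \<Rightarrow> nat \<Rightarrow> (nat \<Rightarrow> 'a) set"
  where "window_exceeds p N K w n = {x \<in> lp p. \<exists>d\<le>N. K < norm (w d * x (n + d))}"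

lemma window_exceeds_sets:
  assumes "1 \<le> p"
  shows "window_exceeds p N K w n \<in> sets (lp_borel p)"
proof -
  have "(\<lambda>z. norm (w d * z)) \<in> borel_measurable borel" for d
    by (intro borel_measurable_continuous_onI continuous_intros)
  from measurable_compose[OF lp_coordinate_measurable[OF assms] this]
  have "(\<lambda>x. norm (w d * x (n + d))) \<in> borel_measurable (lp_borel p)" for d .
  then have "{x \<in> space (lp_borel p). K < norm (w d * x (n + d))} \<in> sets (lp_borel p)" for d
    by (simp add: borel_measurable_iff_greater)
  then have "(\<Union>d\<in>{..N}. {x \<in> space (lp_borel p). K < norm (w d * x (n + d))}) \<in> sets (lp_borel p)"
    by (intro sets.finite_UN) auto
  moreover have "window_exceeds p N K w n
      = (\<Union>d\<in>{..N}. {x \<in> space (lp_borel p). K < norm (w d * x (n + d))})"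
    by (auto simp: window_exceeds_def space_lp_borel[OF assms])
  ultimately show ?thesis
    by simp
qed

lemma emeasure_window_exceeds_shift:
  assumes "1 \<le> p" "bounded (range a)" "lp_invariant_prob p (wshift a) m"
  shows "emeasure m (window_exceeds p N K (\<lambda>d. c d * wprod a (n + d)) n)
       = emeasure m (window_exceeds p N K (\<lambda>d. c d * wprod a d) 0)"
proof (induction n)
  case (Suc n)
  have "window_exceeds p N K (\<lambda>d. c d * wprod a (Suc n + d)) (Suc n)
      = {x \<in> lp p. wshift a x \<in> window_exceeds p N K (\<lambda>d. c d * wprod a (n + d)) n}"
  proof -
    have shift: "c d * wprod a (n + d) * wshift a x (n + d) = c d * wprod a (Suc n + d) * x (Suc n + d)"
      for x d
      by (simp add: wprod_wshift mult.assoc)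
    show ?thesis
      using wshift_lp[OF _ assms(2), of p] assms(1) unfolding window_exceeds_def by (auto simp: shift)
  qed
  moreover have "emeasure m {x \<in> lp p. wshift a x \<in> window_exceeds p N K (\<lambda>d. c d * wprod a (n + d)) n}
      = emeasure m (window_exceeds p N K (\<lambda>d. c d * wprod a (n + d)) n)"
    using assms(3) window_exceeds_sets[OF assms(1)] unfolding lp_invariant_prob_def by blast
  ultimately show ?case
    using Suc.IH by simp
qed simp

lemma measure_window_exceeds_large:
  assumes "1 \<le> p" "prob_space m" "sets m = sets (lp_borel p)" "emeasure m {\<lambda>n. 0} = 0"
    and "\<And>d. w d \<noteq> 0" "0 < e"
  shows "\<exists>N \<delta>. 0 < \<delta> \<and> 1 - e < measure m (window_exceeds p N \<delta> w 0)"
proof -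
  interpret prob_space m
    by (rule assms(2))
  have space: "space m = lp p"
    using sets_eq_imp_space_eq[OF assms(3)] space_lp_borel[OF assms(1)] by simp
  define G where "G j = window_exceeds p j (1 / real (Suc j)) w 0" for j
  have G_sets: "range G \<subseteq> sets m"
    using window_exceeds_sets[OF assms(1)] assms(3) by (auto simp: G_def)
  have "incseq G"
  proof (rule incseq_SucI)
    fix j
    have "1 / real (Suc (Suc j)) \<le> 1 / real (Suc j)"
      by (simp add: frac_le)
    then show "G j \<subseteq> G (Suc j)"
      unfolding G_def window_exceeds_def by (auto intro: le_SucI order.strict_trans1)
  qed
  have "space m - (\<Union>j. G j) = {\<lambda>n. 0}"
  proof (intro equalityI subsetI)
    fix x
    assume x: "x \<in> space m - (\<Union>j. G j)"
    have "x d = 0" for d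
    proof (rule ccontr)
      assume "x d \<noteq> 0"
      then have "0 < norm (w d * x d)"
        using assms(5) by simp
      then obtain j where "inverse (real (Suc j)) < norm (w d * x d)"
        using reals_Archimedean by blast
      then have "x \<in> G (max j d)"
      proof -
        have "1 / real (Suc (max j d)) \<le> inverse (real (Suc j))"
          by (simp add: inverse_eq_divide frac_le)
        then show ?thesis
          using x space \<open>inverse (real (Suc j)) < _\<close> unfolding G_def window_exceeds_def
          by (auto intro!: exI[of _ d])
      qed
      then show False
        using x by blast
    qed
    then show "x \<in> {\<lambda>n. 0}"
      by auto
  qed (auto simp: space G_def window_exceeds_def lp_def)
  then have "measure m (\<Union>j. G j) = 1"
    using finite_measure_compl[of "\<Union>j. G j"] G_sets assms(4) prob_space by (auto simp: measure_def)
  moreover have "(\<lambda>j. measure m (G j)) \<longlonglongrightarrow> measure m (\<Union>j. G j)"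
    using G_sets \<open>incseq G\<close> by (rule finite_Lim_measure_incseq)
  ultimately have "\<forall>\<^sub>F j in sequentially. 1 - e < measure m (G j)"
    using assms(6) by (intro order_tendstoD(1)) auto
  then obtain j where "1 - e < measure m (G j)"
    by (auto simp: eventually_sequentially)
  then show ?thesis
    unfolding G_def by (intro exI conjI) auto
qed

lemma measure_window_exceeds_small:
  assumes "1 \<le> p" "finite_measure m" "sets m = sets (lp_borel p)" "0 < e"
  shows "\<exists>K>0. measure m (window_exceeds p N K w 0) < e"
proof -
  interpret finite_measure m
    by (rule assms(2))
  define H where "H k = window_exceeds p N (real (Suc k)) w 0" for k
  have H_sets: "range H \<subseteq> sets m"
    using window_exceeds_sets[OF assms(1)] assms(3) by (auto simp: H_def)
  have "decseq H"
    by (rule decseq_SucI) (force simp: H_def window_exceeds_def)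
  have "(\<Inter>k. H k) = {}"
  proof safe
    fix x
    assume x: "x \<in> (\<Inter>k. H k)"
    obtain k where k: "(\<Sum>d\<le>N. norm (w d * x d)) < real k"
      using reals_Archimedean2 by blast
    obtain d where "d \<le> N" "real (Suc k) < norm (w d * x d)"
      using x by (auto simp: H_def window_exceeds_def)
    moreover from \<open>d \<le> N\<close> have "norm (w d * x d) \<le> (\<Sum>d\<le>N. norm (w d * x d))"
      by (intro member_le_sum) auto
    ultimately show "x \<in> {}"
      using k by simp
  qed
  then have "(\<lambda>k. measure m (H k)) \<longlonglongrightarrow> 0"
    using finite_Lim_measure_decseq[OF H_sets \<open>decseq H\<close>] by simp
  then have "\<forall>\<^sub>F k in sequentially. measure m (H k) < e"
    using assms(4) by (rule order_tendstoD(2))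
  then obtain k where "measure m (H k) < e"
    by (auto simp: eventually_sequentially)
  then show ?thesis
    unfolding H_def by (intro exI[of _ "real (Suc k)"]) auto
qed

lemma window_exceeds_subset:
  assumes "0 < c" "K \<le> c * \<delta>" "\<And>d. d \<le> N \<Longrightarrow> c * norm (v d) \<le> norm (w d)"
  shows "window_exceeds p N \<delta> v n \<subseteq> window_exceeds p N K w n"
proof
  fix x
  assume "x \<in> window_exceeds p N \<delta> v n"
  then obtain d where x: "x \<in> lp p" "d \<le> N" "\<delta> < norm (v d * x (n + d))"
    by (auto simp: window_exceeds_def)
  have "K < c * norm (v d * x (n + d))"
    using assms(1,2) x(3) by (meson mult_strict_left_mono order.strict_trans1)
  also have "\<dots> \<le> norm (w d * x (n + d))"
    using assms(3)[OF x(2)] by (simp add: norm_mult mult.assoc[symmetric] mult_right_mono)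
  finally show "x \<in> window_exceeds p N K w n"
    using x by (auto simp: window_exceeds_def)
qed

lemma measure_window_exceeds_le_shifted:
  assumes p: "1 \<le> p" and "bounded (range a)" and nonzero: "\<forall>n\<ge>1. a n \<noteq> 0"
    and m: "lp_invariant_prob p (wshift a) m" and "0 < \<delta>" "0 < K"
    and le: "\<And>d. d \<le> N \<Longrightarrow> K * norm (wprod a (n + d)) \<le> \<delta> * norm (w d)"
  shows "measure m (window_exceeds p N \<delta> (wprod a) 0) \<le> measure m (window_exceeds p N K w n)"
proof -
  define r where "r d = w d / wprod a (n + d)" for d
  have "K / \<delta> * norm (wprod a d) \<le> norm (r d * wprod a d)" if "d \<le> N" for d
  proof -
    have "K / \<delta> \<le> norm (r d)"
      using le[OF that] \<open>0 < \<delta>\<close> wprod_nonzero[OF nonzero]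
      by (simp add: r_def norm_divide field_simps)
    then show ?thesis
      unfolding norm_mult by (rule mult_right_mono) simp
  qed
  then have "window_exceeds p N \<delta> (wprod a) 0 \<subseteq> window_exceeds p N K (\<lambda>d. r d * wprod a d) 0"
    using \<open>0 < \<delta>\<close> \<open>0 < K\<close> by (intro window_exceeds_subset[of "K / \<delta>"]) auto
  then have "measure m (window_exceeds p N \<delta> (wprod a) 0)
      \<le> measure m (window_exceeds p N K (\<lambda>d. r d * wprod a d) 0)"
    using m window_exceeds_sets[OF p]
    by (intro finite_measure.finite_measure_mono prob_space.finite_measure)
      (auto simp: lp_invariant_prob_def)
  also have "\<dots> = measure m (window_exceeds p N K w n)"
    using emeasure_window_exceeds_shift[OF p assms(2) m, of N K r n] wprod_nonzero[OF nonzero]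
    by (simp add: r_def measure_def)
  finally show ?thesis .
qed

lemma wshift_invariant_measures_separated:
  fixes a b :: "nat \<Rightarrow> 'a::real_normed_field"
  assumes p: "1 \<le> p" and bounded: "bounded (range a)" "bounded (range b)"
    and nonzero: "\<forall>n\<ge>1. a n \<noteq> 0" "\<forall>n\<ge>1. b n \<noteq> 0"
    and ma: "lp_invariant_prob p (wshift a) ma" and mb: "lp_invariant_prob p (wshift b) mb"
    and ma0: "emeasure ma {\<lambda>n. 0} = 0"
    and ratio: "\<And>N e. 0 < e \<Longrightarrow> \<exists>n. \<forall>d\<le>N. norm (wprod a (n + d) / wprod b (n + d)) \<le> e"
    and "0 < e"
  shows "\<exists>A\<in>sets (lp_borel p). measure mb A < e \<and> measure ma (lp p - A) < e"
proof -
  interpret ma: prob_space ma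
    using ma by (simp add: lp_invariant_prob_def)
  interpret mb: prob_space mb
    using mb by (simp add: lp_invariant_prob_def)
  have sets: "sets ma = sets (lp_borel p)" "sets mb = sets (lp_borel p)" "space ma = lp p"
    using ma mb by (auto simp: lp_invariant_prob_def)
  obtain N \<delta> where "0 < \<delta>" and large: "1 - e < measure ma (window_exceeds p N \<delta> (wprod a) 0)"
    using measure_window_exceeds_large[OF p ma.prob_space_axioms sets(1) ma0, of "wprod a"]
      wprod_nonzero[OF nonzero(1)] \<open>0 < e\<close>
    by blast
  obtain K where "0 < K" and small: "measure mb (window_exceeds p N K (wprod b) 0) < e"
    using measure_window_exceeds_small[OF p mb.finite_measure_axioms sets(2) \<open>0 < e\<close>] by blast
  obtain n where n: "\<And>d. d \<le> N \<Longrightarrow> norm (wprod a (n + d) / wprod b (n + d)) \<le> \<delta> / K"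
    using ratio[of "\<delta> / K" N] \<open>0 < \<delta>\<close> \<open>0 < K\<close> by auto
  define A where "A = window_exceeds p N K (\<lambda>d. wprod b (n + d)) n"
  have A_sets: "A \<in> sets (lp_borel p)"
    unfolding A_def by (rule window_exceeds_sets[OF p])
  have "measure mb A = measure mb (window_exceeds p N K (wprod b) 0)"
    using emeasure_window_exceeds_shift[OF p bounded(2) mb, of N K "\<lambda>_. 1" n] by (simp add: A_def measure_def)
  with small have "measure mb A < e"
    by simp
  have "K * norm (wprod a (n + d)) \<le> \<delta> * norm (wprod b (n + d))" if "d \<le> N" for d
    using n[OF that] \<open>0 < K\<close> wprod_nonzero[OF nonzero(2)]
    by (simp add: norm_divide field_simps)
  then have "measure ma (window_exceeds p N \<delta> (wprod a) 0) \<le> measure ma A"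
    unfolding A_def
    by (rule measure_window_exceeds_le_shifted[OF p bounded(1) nonzero(1) ma \<open>0 < \<delta>\<close> \<open>0 < K\<close>])
  with large have "measure ma (lp p - A) < e"
    using ma.prob_compl[of A] A_sets sets by simp
  with \<open>measure mb A < e\<close> A_sets show ?thesis
    by blast
qed

lemma mutually_singularI:
  assumes "finite_measure M1" "finite_measure M2" "sets M1 = sets M2"
    and small: "\<And>e. 0 < e \<Longrightarrow> \<exists>A\<in>sets M1. measure M1 A < e \<and> measure M2 (space M2 - A) < e"
  shows "mutually_singular M1 M2"
proof -
  interpret M1: finite_measure M1
    by fact
  interpret M2: finite_measure M2
    by fact
  obtain A where A: "\<And>k. A k \<in> sets M1"
    and small1: "\<And>k. measure M1 (A k) < (1 / 2) ^ k"
    and small2: "\<And>k. measure M2 (space M2 - A k) < (1 / 2) ^ k"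
    using small[of "(1 / 2) ^ _"] by (metis zero_less_divide_1_iff zero_less_numeral zero_less_power)
  have geometric: "summable (\<lambda>k. (1 / 2 :: real) ^ k)"
    by (rule summable_geometric) simp
  have "limsup A \<in> null_sets M1"
  proof (rule borel_cantelli_limsup1)
    show "summable (\<lambda>k. measure M1 (A k))"
      using small1 by (intro summable_comparison_test'[OF geometric, of 0]) (simp add: less_imp_le)
  qed (use A in \<open>auto simp: less_top[symmetric]\<close>)
  moreover have "limsup (\<lambda>k. space M2 - A k) \<in> null_sets M2"
  proof (rule borel_cantelli_limsup1)
    show "summable (\<lambda>k. measure M2 (space M2 - A k))"
      using small2 by (intro summable_comparison_test'[OF geometric, of 0]) (simp add: less_imp_le)
  qed (use A assms(3) in \<open>auto simp: less_top[symmetric]\<close>)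
  moreover have "space M2 - limsup A \<subseteq> limsup (\<lambda>k. space M2 - A k)"
  proof
    fix x
    assume "x \<in> space M2 - limsup A"
    then obtain n where "x \<in> space M2" "\<And>m. n \<le> m \<Longrightarrow> x \<notin> A m"
      by (auto simp: limsup_INF_SUP)
    then have "\<exists>m\<ge>k. x \<in> space M2 - A m" for k
      by (intro exI[of _ "max k n"]) auto
    then show "x \<in> limsup (\<lambda>k. space M2 - A k)"
      by (auto simp: limsup_INF_SUP)
  qed
  moreover have "space M2 - limsup A \<in> sets M2"
    using null_setsD2[OF \<open>limsup A \<in> null_sets M1\<close>] assms(3) by auto
  ultimately have "space M2 - limsup A \<in> null_sets M2"
    by (blast intro: null_sets_subset)
  with \<open>limsup A \<in> null_sets M1\<close> assms(3) show ?thesis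
    unfolding mutually_singular_def by (intro bexI[of _ "limsup A"]) auto
qed

lemma mutually_singular_commute:
  assumes "sets M1 = sets M2" "mutually_singular M1 M2"
  shows "mutually_singular M2 M1"
proof -
  obtain A where A: "A \<in> sets M1" "emeasure M1 A = 0" "emeasure M2 (space M2 - A) = 0"
    using assms(2) by (auto simp: mutually_singular_def)
  have "space M1 - (space M2 - A) = A"
    using sets.sets_into_space[OF A(1)] sets_eq_imp_space_eq[OF assms(1)] by auto
  with A assms(1) show ?thesis
    unfolding mutually_singular_def by (intro bexI[of _ "space M2 - A"]) auto
qed

lemma wshift_invariant_measures_singular:
  fixes a b :: "nat \<Rightarrow> 'a::real_normed_field"
  assumes "1 \<le> p" "bounded (range a)" "bounded (range b)" "\<forall>n\<ge>1. a n \<noteq> 0" "\<forall>n\<ge>1. b n \<noteq> 0"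
    and ma: "lp_invariant_prob p (wshift a) ma" and mb: "lp_invariant_prob p (wshift b) mb"
    and "emeasure ma {\<lambda>n. 0} = 0"
    and "\<And>N e. 0 < e \<Longrightarrow> \<exists>n. \<forall>d\<le>N. norm (wprod a (n + d) / wprod b (n + d)) \<le> e"
  shows "mutually_singular mb ma"
proof (rule mutually_singularI)
  show "finite_measure ma" "finite_measure mb" "sets mb = sets ma"
    using ma mb by (auto simp: lp_invariant_prob_def prob_space.finite_measure)
  show "\<exists>A\<in>sets mb. measure mb A < e \<and> measure ma (space ma - A) < e" if "0 < e" for e
    using wshift_invariant_measures_separated[OF assms that] ma mb by (auto simp: lp_invariant_prob_def)
qed

lemma frequently_less_of_Liminf_less:
  fixes X :: "_ \<Rightarrow> _ :: complete_linorder"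
  assumes "Liminf F X < C"
  shows "\<exists>\<^sub>F x in F. X x < C"
proof -
  obtain y where "y < C" "\<not> (\<forall>\<^sub>F x in F. y < X x)"
    using assms by (auto simp: not_le[symmetric] le_Liminf_iff)
  then show ?thesis
    by (auto simp: not_eventually not_less elim: frequently_elim1)
qed

lemma frequently_greater_of_less_Limsup:
  fixes X :: "_ \<Rightarrow> _ :: complete_linorder"
  assumes "C < Limsup F X"
  shows "\<exists>\<^sub>F x in F. C < X x"
proof -
  obtain y where "C < y" "\<not> (\<forall>\<^sub>F x in F. X x < y)"
    using assms by (auto simp: not_le[symmetric] Limsup_le_iff)
  then show ?thesis
    by (auto simp: not_eventually not_less elim: frequently_elim1)
qed

lemma ex_window_le_of_liminf_Max_eq_0:
  fixes f :: "nat \<Rightarrow> nat \<Rightarrow> real"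
  assumes "liminf (\<lambda>n. ereal (Max (f n ` {0..N}))) = 0" "0 < e"
  shows "\<exists>n. \<forall>d\<le>N. f n d \<le> e"
proof -
  have "\<exists>\<^sub>F n in sequentially. ereal (Max (f n ` {0..N})) < ereal e"
    using assms by (intro frequently_less_of_Liminf_less) simp
  then obtain n where "Max (f n ` {0..N}) < e"
    by (auto dest: frequently_ex)
  then show ?thesis
    by (intro exI[of _ n]) (auto intro: less_imp_le)
qed

lemma ex_window_inverse_le_of_limsup_Min_eq_infinity:
  fixes f :: "nat \<Rightarrow> nat \<Rightarrow> real"
  assumes "limsup (\<lambda>n. ereal (Min (f n ` {0..N}))) = \<infinity>" "0 < e"
  shows "\<exists>n. \<forall>d\<le>N. inverse (f n d) \<le> e"
proof -
  have "\<exists>\<^sub>F n in sequentially. ereal (inverse e) < ereal (Min (f n ` {0..N}))"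
    using assms by (intro frequently_greater_of_less_Limsup) simp
  then obtain n where n: "inverse e < Min (f n ` {0..N})"
    by (auto dest: frequently_ex)
  have "inverse (f n d) \<le> e" if "d \<le> N" for d
  proof -
    have "inverse e < f n d"
      using n that by simp
    then show ?thesis
      using \<open>0 < e\<close>
      by (metis inverse_inverse_eq inverse_positive_iff_positive le_imp_inverse_le less_imp_le)
  qed
  then show ?thesis
    by blast
qed

theorem theorem3p10:
  fixes p :: real and u v :: "nat \<Rightarrow> 'a::{real_normed_field, banach}"
  assumes "1 \<le> p"
    and "bounded (range u)" and "bounded (range v)"
    and "\<forall>n\<ge>1. u n \<noteq> 0" and "\<forall>n\<ge>1. v n \<noteq> 0"
    and "(\<forall>N::nat. liminf (\<lambda>n. ereal (Max ((\<lambda>d. norm ((\<Prod>i\<in>{1..n+d}. u i) / (\<Prod>i\<in>{1..n+d}. v i))) ` {0..N}))) = 0)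
       \<or> (\<forall>N::nat. limsup (\<lambda>n. ereal (Min ((\<lambda>d. norm ((\<Prod>i\<in>{1..n+d}. u i) / (\<Prod>i\<in>{1..n+d}. v i))) ` {0..N}))) = \<infinity>)"
  shows "lp_orthogonal p (wshift u) (wshift v)"
  unfolding lp_orthogonal_def
proof (intro allI impI, elim conjE)
  fix m1 m2
  assume m1: "lp_invariant_prob p (wshift u) m1" and m2: "lp_invariant_prob p (wshift v) m2"
    and "emeasure m1 {\<lambda>n. 0} = 0" "emeasure m2 {\<lambda>n. 0} = 0"
  from assms(6) show "mutually_singular m1 m2"
  proof
    assume small: "\<forall>N. liminf (\<lambda>n. ereal (Max ((\<lambda>d. norm ((\<Prod>i\<in>{1..n+d}. u i) / (\<Prod>i\<in>{1..n+d}. v i))) ` {0..N}))) = 0"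
    have "\<exists>n. \<forall>d\<le>N. norm (wprod u (n + d) / wprod v (n + d)) \<le> e" if "0 < e" for N e
      unfolding wprod_def by (rule ex_window_le_of_liminf_Max_eq_0[OF small[rule_format] that])
    then have "mutually_singular m2 m1"
      by (rule wshift_invariant_measures_singular[OF assms(1-5) m1 m2 \<open>emeasure m1 _ = 0\<close>])
    then show ?thesis
      by (rule mutually_singular_commute[rotated]) (use m1 m2 in \<open>simp add: lp_invariant_prob_def\<close>)
  next
    assume large: "\<forall>N. limsup (\<lambda>n. ereal (Min ((\<lambda>d. norm ((\<Prod>i\<in>{1..n+d}. u i) / (\<Prod>i\<in>{1..n+d}. v i))) ` {0..N}))) = \<infinity>"
    have "\<exists>n. \<forall>d\<le>N. norm (wprod v (n + d) / wprod u (n + d)) \<le> e" if "0 < e" for N e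
      unfolding wprod_def using ex_window_inverse_le_of_limsup_Min_eq_infinity[OF large[rule_format] that]
      by (simp add: norm_divide)
    then show ?thesis
      by (rule wshift_invariant_measures_singular[OF assms(1,3,2,5,4) m2 m1 \<open>emeasure m2 _ = 0\<close>])
  qed
qed

end
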